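(* Let $G=(N,E)$ be a finite graph and $r\ge 1$, $\varepsilon\ge 0$. Suppose $G$ is $(\varepsilon,r)$-amenable. Then there exists an action-symmetric leader equilibrium of the local-communication coordination game on $G$ with radius of communication $r$ whose expected inefficiency is at most $\varepsilon$.
   Context: Graph conventions: $N$ is a finite set of agents, $E\subseteq N\times N$ is a set of ordered pairs with $(i,j)\in E$ iff $(j,i)\in E$ and $(i,i)\notin E$. $N_i=\{j:(i,j)\in E\}$. $B_r(i)$ is the set of agents at graph distance at most $r$ from $i$. A set $C\subseteq N$ has radius at most $r$ if there is $i\in C$ with $C\subseteq B_r(i)$. $(\varepsilon,r)$-amenability: $G$ is $(\varepsilon,r)$-amenable if there is a partition of $N$ into connected sets of radius at most $r$ such that the number of pairs $(i,j)\in E$ with $i,j$ in different parts is at most $\varepsilon|E|$. The game: actions $A=\{-1,+1\}$; utility of agent $i$ under action profile $a$ is $u_i(a)=-\sum_{j\in N_i}|a_i-a_j|$. Let $\mathcal{A}$ be a finite alphabet containing the letters $-1,+1,\emptyset$, and the message space is $\mathcal{M}=\mathcal{A}^{\mathbb{N}}$; a letter $\alpha$ is identified with the message $(\alpha,\emptyset,\emptyset,\dots)$, and $\emptyset$ denotes the empty message. With radius of communication $r$: (1) each agent $i$ simultaneously sends a locally public message $m_i\in\mathcal{M}$, observed by all agents in $B_r(i)$, and a private message $\hat m_{i,j}\in\mathcal{M}$ to each $j\in B_r(i)$; (2) agent $i$ observes $(m_j)_{j\in B_r(i)}$ and $(\hat m_{j,i})_{j\in B_r(i)}$; (3) agent $i$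 chooses $a_i\in A$. A pure strategy is $\sigma_i=(m_i,(\hat m_{i,j})_{j\in B_r(i)},o_i)$ where $o_i$ is a measurable map from received messages to $A$; mixed strategies are independent (across agents) random pure strategies. An equilibrium is a (mixed) Nash equilibrium of this game. The inefficiency of the realized action profile is $I=\frac{2}{|E|}\sum_{(i,j)\in E}\mathbf 1_{a_i\neq a_j}$; expected inefficiency is $\mathbb E[I]$. Action symmetry: negation on $\mathcal{A}$ swaps $-1$ and $+1$ and fixes all other letters; it is extended coordinatewise to messages and tuples of messages. For a map $f$ between such spaces, $\iota(f)(x)=-f(-x)$. For a pure strategy, $\iota(\sigma_i)=(-m_i,-\hat m_{i\to},\iota(o_i))$. A mixed strategy $\sigma_i$ is action-symmetric if $\sigma_i$ and $\iota(\sigma_i)$ have the same distribution; a profile is action-symmetric if every agent's strategy is. Leader equilibrium (private-message form): given a partition of $N$ into communities $C_1,C_2,\dots$ of radius at most $r$ and leaders $\ell_k\in C_k$ with $C_k\subseteq B_r(\ell_k)$: all public messages are empty; each leader $\ell_k$ draws one uniform message in $\{-1,+1\}$ and sends it privately to every member of $C_k$, sending empty private messages to all others; non-leaders send empty messages; each $i\in C_k$ takes $a_i=\hat m_{\ell_k,i}$ (messages not from one's leader or not in $\{-1,+1\}$ are ignored, and an agent who receives no message in $\{-1,+1\}$ from their leader chooses uniformly at random). A leader equilibrium is such a profile that is an equilibrium. *)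

theory Defs
  imports "HOL-Probability.Probability" "HOL-Library.Disjoint_Sets"
begin

definition graph :: "'a set \<Rightarrow> ('a \<times> 'a) set \<Rightarrow> bool" where
  "graph N E \<longleftrightarrow> finite N \<and> E \<subseteq> N \<times> N \<and> sym E \<and> (\<forall>i. (i, i) \<notin> E)"

definition nbrs :: "('a \<times> 'a) set \<Rightarrow> 'a \<Rightarrow> 'a set" where
  "nbrs E i = {j. (i, j) \<in> E}"

definition ball :: "('a \<times> 'a) set \<Rightarrow> nat \<Rightarrow> 'a \<Rightarrow> 'a set" where
  "ball E r i = {j. \<exists>k\<le>r. (i, j) \<in> E ^^ k}"

definition radius_le :: "('a \<times> 'a) set \<Rightarrow> nat \<Rightarrow> 'a set \<Rightarrow> bool" where
  "radius_le E r C \<longleftrightarrow> (\<exists>i\<in>C. C \<subseteq> ball E r i)"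

definition connected_set :: "('a \<times> 'a) set \<Rightarrow> 'a set \<Rightarrow> bool" where
  "connected_set E C \<longleftrightarrow> (\<forall>i\<in>C. \<forall>j\<in>C. (i, j) \<in> (E \<inter> (C \<times> C))\<^sup>*)"

definition cut_edges :: "('a \<times> 'a) set \<Rightarrow> 'a set set \<Rightarrow> ('a \<times> 'a) set" where
  "cut_edges E P = {(i, j) \<in> E. \<not> (\<exists>C\<in>P. i \<in> C \<and> j \<in> C)}"

definition amenable :: "'a set \<Rightarrow> ('a \<times> 'a) set \<Rightarrow> real \<Rightarrow> nat \<Rightarrow> bool" where
  "amenable N E \<epsilon> r \<longleftrightarrow>
     (\<exists>P. partition_on N P \<and> (\<forall>C\<in>P. connected_set E C \<and> radius_le E r C)
        \<and> real (card (cut_edges E P)) \<le> \<epsilon> * real (card E))"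

datatype act = Minus | Plus

fun aval :: "act \<Rightarrow> int" where
  "aval Minus = -1" | "aval Plus = 1"

fun flip :: "act \<Rightarrow> act" where
  "flip Minus = Plus" | "flip Plus = Minus"

text \<open>The alphabet is a finite type 'l with three distinguished distinct letters
  neg (= -1), pos (= +1), emp (= the empty letter). Messages are sequences of letters.\<close>

type_synonym 'l msg = "nat \<Rightarrow> 'l"

definition letter_msg :: "'l \<Rightarrow> 'l \<Rightarrow> 'l msg" where
  "letter_msg emp \<alpha> = (\<lambda>n. if n = 0 then \<alpha> else emp)"

definition empty_msg :: "'l \<Rightarrow> 'l msg" where
  "empty_msg emp = (\<lambda>_. emp)"

definition neg_letter :: "'l \<Rightarrow> 'l \<Rightarrow> 'l \<Rightarrow> 'l" where
  "neg_letter neg pos x = (if x = neg then pos else if x = pos then neg else x)"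

definition neg_msg :: "'l \<Rightarrow> 'l \<Rightarrow> 'l msg \<Rightarrow> 'l msg" where
  "neg_msg neg pos m = (\<lambda>n. neg_letter neg pos (m n))"

definition neg_msgs :: "'l \<Rightarrow> 'l \<Rightarrow> ('a \<Rightarrow> 'l msg) \<Rightarrow> ('a \<Rightarrow> 'l msg)" where
  "neg_msgs neg pos ms = (\<lambda>j. neg_msg neg pos (ms j))"

text \<open>A pure strategy: a locally public message, private messages to each agent
  (only those to agents in B_r(i) are ever observed), and an action rule mapping
  the observed public messages and received private messages (indexed by sender)
  to an action.\<close>

record ('a, 'l) strat =
  pub :: "'l msg"
  priv :: "'a \<Rightarrow> 'l msg"
  out :: "('a \<Rightarrow> 'l msg) \<Rightarrow> ('a \<Rightarrow> 'l msg) \<Rightarrow> act"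

definition iota :: "'l \<Rightarrow> 'l \<Rightarrow> ('a, 'l) strat \<Rightarrow> ('a, 'l) strat" where
  "iota neg pos s =
     \<lparr> pub = neg_msg neg pos (pub s),
       priv = neg_msgs neg pos (priv s),
       out = (\<lambda>ps qs. flip (out s (neg_msgs neg pos ps) (neg_msgs neg pos qs))) \<rparr>"

definition recv_pub :: "('a \<times> 'a) set \<Rightarrow> nat \<Rightarrow> 'l \<Rightarrow> ('a \<Rightarrow> ('a, 'l) strat) \<Rightarrow> 'a \<Rightarrow> ('a \<Rightarrow> 'l msg)" where
  "recv_pub E r emp s i = (\<lambda>j. if j \<in> ball E r i then pub (s j) else empty_msg emp)"

definition recv_priv :: "('a \<times> 'a) set \<Rightarrow> nat \<Rightarrow> 'l \<Rightarrow> ('a \<Rightarrow> ('a, 'l) strat) \<Rightarrow> 'a \<Rightarrow> ('a \<Rightarrow> 'l msg)" where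
  "recv_priv E r emp s i = (\<lambda>j. if j \<in> ball E r i then priv (s j) i else empty_msg emp)"

definition actions :: "('a \<times> 'a) set \<Rightarrow> nat \<Rightarrow> 'l \<Rightarrow> ('a \<Rightarrow> ('a, 'l) strat) \<Rightarrow> ('a \<Rightarrow> act)" where
  "actions E r emp s = (\<lambda>i. out (s i) (recv_pub E r emp s i) (recv_priv E r emp s i))"

definition utility :: "('a \<times> 'a) set \<Rightarrow> 'a \<Rightarrow> ('a \<Rightarrow> act) \<Rightarrow> real" where
  "utility E i a = - (\<Sum>j\<in>nbrs E i. real_of_int \<bar>aval (a i) - aval (a j)\<bar>)"

definition inefficiency :: "('a \<times> 'a) set \<Rightarrow> ('a \<Rightarrow> act) \<Rightarrow> real" where
  "inefficiency E a = 2 / real (card E) * (\<Sum>(i, j)\<in>E. if a i \<noteq> a j then 1 else 0)"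

definition profile_pmf :: "'a set \<Rightarrow> ('a \<Rightarrow> ('a, 'l) strat pmf) \<Rightarrow> ('a \<Rightarrow> ('a, 'l) strat) pmf" where
  "profile_pmf N \<sigma> = Pi_pmf N undefined \<sigma>"

definition exp_utility :: "'a set \<Rightarrow> ('a \<times> 'a) set \<Rightarrow> nat \<Rightarrow> 'l \<Rightarrow> ('a \<Rightarrow> ('a, 'l) strat pmf) \<Rightarrow> 'a \<Rightarrow> real" where
  "exp_utility N E r emp \<sigma> i =
     measure_pmf.expectation (profile_pmf N \<sigma>) (\<lambda>s. utility E i (actions E r emp s))"

definition exp_inefficiency :: "'a set \<Rightarrow> ('a \<times> 'a) set \<Rightarrow> nat \<Rightarrow> 'l \<Rightarrow> ('a \<Rightarrow> ('a, 'l) strat pmf) \<Rightarrow> real" where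
  "exp_inefficiency N E r emp \<sigma> =
     measure_pmf.expectation (profile_pmf N \<sigma>) (\<lambda>s. inefficiency E (actions E r emp s))"

definition equilibrium :: "'a set \<Rightarrow> ('a \<times> 'a) set \<Rightarrow> nat \<Rightarrow> 'l \<Rightarrow> ('a \<Rightarrow> ('a, 'l) strat pmf) \<Rightarrow> bool" where
  "equilibrium N E r emp \<sigma> \<longleftrightarrow>
     (\<forall>i\<in>N. \<forall>\<tau>. exp_utility N E r emp (\<sigma>(i := \<tau>)) i \<le> exp_utility N E r emp \<sigma> i)"

definition action_symmetric :: "'a set \<Rightarrow> 'l \<Rightarrow> 'l \<Rightarrow> ('a \<Rightarrow> ('a, 'l) strat pmf) \<Rightarrow> bool" where
  "action_symmetric N neg pos \<sigma> \<longleftrightarrow> (\<forall>i\<in>N. map_pmf (iota neg pos) (\<sigma> i) = \<sigma> i)"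

definition letter_of :: "'l \<Rightarrow> 'l \<Rightarrow> act \<Rightarrow> 'l" where
  "letter_of neg pos b = (case b of Minus \<Rightarrow> neg | Plus \<Rightarrow> pos)"

definition follow_rule :: "'l \<Rightarrow> 'l \<Rightarrow> 'l \<Rightarrow> 'a \<Rightarrow> act \<Rightarrow> ('a \<Rightarrow> 'l msg) \<Rightarrow> ('a \<Rightarrow> 'l msg) \<Rightarrow> act" where
  "follow_rule neg pos emp l c = (\<lambda>ps qs.
     if qs l = letter_msg emp pos then Plus
     else if qs l = letter_msg emp neg then Minus
     else c)"

definition coin :: "act pmf" where
  "coin = pmf_of_set {Minus, Plus}"

definition follower_mixed :: "'l \<Rightarrow> 'l \<Rightarrow> 'l \<Rightarrow> 'a \<Rightarrow> ('a, 'l) strat pmf" where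
  "follower_mixed neg pos emp l =
     map_pmf (\<lambda>c. \<lparr> pub = empty_msg emp, priv = (\<lambda>_. empty_msg emp),
                     out = follow_rule neg pos emp l c \<rparr>) coin"

definition leader_mixed :: "'l \<Rightarrow> 'l \<Rightarrow> 'l \<Rightarrow> 'a set \<Rightarrow> 'a \<Rightarrow> ('a, 'l) strat pmf" where
  "leader_mixed neg pos emp C l =
     map_pmf (\<lambda>(b, c). \<lparr> pub = empty_msg emp,
                          priv = (\<lambda>j. if j \<in> C then letter_msg emp (letter_of neg pos b) else empty_msg emp),
                          out = follow_rule neg pos emp l c \<rparr>) (pair_pmf coin coin)"

definition leader_profile ::
  "'a set \<Rightarrow> ('a \<times> 'a) set \<Rightarrow> nat \<Rightarrow> 'l \<Rightarrow> 'l \<Rightarrow> 'l \<Rightarrow> 'a set set \<Rightarrow> ('a set \<Rightarrow> 'a)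
     \<Rightarrow> ('a \<Rightarrow> ('a, 'l) strat pmf) \<Rightarrow> bool" where
  "leader_profile N E r neg pos emp P ld \<sigma> \<longleftrightarrow>
     partition_on N P \<and>
     (\<forall>C\<in>P. ld C \<in> C \<and> C \<subseteq> ball E r (ld C)) \<and>
     (\<forall>C\<in>P. \<forall>i\<in>C. \<sigma> i = (if i = ld C then leader_mixed neg pos emp C i
                                        else follower_mixed neg pos emp (ld C)))"

end

theory Submission
  imports Defs
begin

(* Every member of a community plays the bit its leader draws, so neighbours in the same
   community always coordinate. If j lies in a community C not containing i, the bit j plays
   is a fair coin drawn by the leader of C, who sends it only to C; so it is independent of
   everything i observes, and i disagrees with j with probability 1/2 whatever i does.
   Hence no deviation changes i's expected loss from other communities, and its loss
   inside its own community is already 0. Every cut edge is miscoordinated with probability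
   1/2 and no other edge is, so the expected inefficiency is |cut|/|E|. Negating all
   letters and actions leaves the fair coins invariant, which gives action symmetry. *)

lemma sym_relpow:
  assumes "sym R"
  shows "sym (R ^^ n)"
proof (induction n)
  case 0
  then show ?case by (simp add: sym_Id)
next
  case (Suc n)
  then show ?case
    using assms unfolding sym_conv_converse_eq
    by (metis converse_relcomp relpow.simps(2) relpow_commute)
qed

lemma ball_sym: "sym E \<Longrightarrow> j \<in> ball E r i \<Longrightarrow> i \<in> ball E r j"
  unfolding ball_def by (blast dest: symD[OF sym_relpow])

lemma letter_msg_eq_iff: "letter_msg emp a = letter_msg emp b \<longleftrightarrow> a = b"
  unfolding letter_msg_def by metis

lemma neg_msg_neg_msg [simp]: "neg_msg neg pos (neg_msg neg pos m) = m"
  unfolding neg_msg_def neg_letter_def by auto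

lemma neg_msg_letter_msg:
  "neg \<noteq> emp \<Longrightarrow> pos \<noteq> emp \<Longrightarrow>
     neg_msg neg pos (letter_msg emp a) = letter_msg emp (neg_letter neg pos a)"
  unfolding neg_msg_def letter_msg_def neg_letter_def by auto

lemma neg_msg_empty_msg:
  "neg \<noteq> emp \<Longrightarrow> pos \<noteq> emp \<Longrightarrow> neg_msg neg pos (empty_msg emp) = empty_msg emp"
  unfolding neg_msg_def empty_msg_def neg_letter_def by auto

lemma neg_letter_letter_of:
  "neg \<noteq> pos \<Longrightarrow> neg_letter neg pos (letter_of neg pos b) = letter_of neg pos (flip b)"
  by (cases b) (auto simp: neg_letter_def letter_of_def)

lemma follow_rule_neg_msgs:
  assumes "neg \<noteq> pos" "neg \<noteq> emp" "pos \<noteq> emp"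
  shows "(\<lambda>ps qs. flip (follow_rule neg pos emp l c (neg_msgs neg pos ps) (neg_msgs neg pos qs)))
           = follow_rule neg pos emp l (flip c)"
proof (intro ext)
  fix ps qs
  have "neg_msg neg pos (qs l) = letter_msg emp x \<longleftrightarrow> qs l = letter_msg emp (neg_letter neg pos x)" for x
    using assms(2,3) by (metis neg_msg_letter_msg neg_msg_neg_msg)
  moreover have "neg_letter neg pos pos = neg" "neg_letter neg pos neg = pos"
    unfolding neg_letter_def using assms by auto
  moreover have "letter_msg emp pos \<noteq> letter_msg emp neg"
    using assms(1) by (simp add: letter_msg_eq_iff)
  ultimately show "flip (follow_rule neg pos emp l c (neg_msgs neg pos ps) (neg_msgs neg pos qs))
                     = follow_rule neg pos emp l (flip c) ps qs"
    unfolding follow_rule_def neg_msgs_def by (cases c) auto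
qed

lemma map_pmf_flip_coin: "map_pmf flip coin = coin"
proof -
  have "inj_on flip {Minus, Plus}"
    by (simp add: inj_on_def)
  then show ?thesis
    unfolding coin_def by (simp add: map_pmf_of_set_inj insert_commute)
qed

lemma map_pmf_ne_coin: "map_pmf (\<lambda>b. c \<noteq> b) coin = pmf_of_set UNIV"
proof -
  have "inj_on (\<lambda>b. c \<noteq> b) {Minus, Plus}" and "(\<lambda>b. c \<noteq> b) ` {Minus, Plus} = UNIV"
    by (cases c; auto simp: inj_on_def)+
  then show ?thesis
    unfolding coin_def by (simp add: map_pmf_of_set_inj)
qed

lemma disagree_independent_coin:
  assumes "map_pmf h L = coin"
  shows "map_pmf (\<lambda>(y, z). g z \<noteq> h y) (pair_pmf L Q) = pmf_of_set UNIV"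
proof -
  have "map_pmf (\<lambda>(y, z). g z \<noteq> h y) (pair_pmf L Q)
      = map_pmf (\<lambda>(c, b). c \<noteq> b) (pair_pmf (map_pmf g Q) (map_pmf h L))"
    by (subst pair_commute_pmf) (simp add: map_pair[symmetric] pmf.map_comp o_def case_prod_unfold)
  also have "\<dots> = bind_pmf (map_pmf g Q) (\<lambda>c. map_pmf (\<lambda>b. c \<noteq> b) coin)"
    unfolding assms pair_pmf_def map_bind_pmf
    by (simp add: map_pmf_def bind_assoc_pmf bind_return_pmf)
  also have "\<dots> = pmf_of_set UNIV"
    by (simp add: map_pmf_ne_coin bind_pmf_const)
  finally show ?thesis .
qed

definition leader_strat :: "'l \<Rightarrow> 'l \<Rightarrow> 'l \<Rightarrow> 'a set \<Rightarrow> 'a \<Rightarrow> act \<Rightarrow> act \<Rightarrow> ('a, 'l) strat" where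
  "leader_strat neg pos emp C l b c =
     \<lparr> pub = empty_msg emp,
       priv = (\<lambda>j. if j \<in> C then letter_msg emp (letter_of neg pos b) else empty_msg emp),
       out = follow_rule neg pos emp l c \<rparr>"

definition follower_strat :: "'l \<Rightarrow> 'l \<Rightarrow> 'l \<Rightarrow> 'a \<Rightarrow> act \<Rightarrow> ('a, 'l) strat" where
  "follower_strat neg pos emp l c =
     \<lparr> pub = empty_msg emp, priv = (\<lambda>_. empty_msg emp), out = follow_rule neg pos emp l c \<rparr>"

lemma leader_mixed_eq_map_pmf:
  "leader_mixed neg pos emp C l = map_pmf (\<lambda>(b, c). leader_strat neg pos emp C l b c) (pair_pmf coin coin)"
  unfolding leader_mixed_def leader_strat_def ..

lemma follower_mixed_eq_map_pmf:
  "follower_mixed neg pos emp l = map_pmf (follower_strat neg pos emp l) coin"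
  unfolding follower_mixed_def follower_strat_def ..

lemma set_leader_mixed:
  "t \<in> set_pmf (leader_mixed neg pos emp C l) \<Longrightarrow> \<exists>b c. t = leader_strat neg pos emp C l b c"
  unfolding leader_mixed_eq_map_pmf by auto

lemma set_follower_mixed:
  "t \<in> set_pmf (follower_mixed neg pos emp l) \<Longrightarrow> \<exists>c. t = follower_strat neg pos emp l c"
  unfolding follower_mixed_eq_map_pmf by auto

lemma iota_leader_strat:
  assumes "neg \<noteq> pos" "neg \<noteq> emp" "pos \<noteq> emp"
  shows "iota neg pos (leader_strat neg pos emp C l b c) = leader_strat neg pos emp C l (flip b) (flip c)"
  using assms
  by (simp add: iota_def leader_strat_def follow_rule_neg_msgs;
      auto simp: neg_msgs_def neg_msg_empty_msg neg_msg_letter_msg neg_letter_letter_of)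

lemma iota_follower_strat:
  assumes "neg \<noteq> pos" "neg \<noteq> emp" "pos \<noteq> emp"
  shows "iota neg pos (follower_strat neg pos emp l c) = follower_strat neg pos emp l (flip c)"
  using assms
  by (simp add: iota_def follower_strat_def follow_rule_neg_msgs;
      simp add: neg_msgs_def neg_msg_empty_msg)

lemma map_iota_leader_mixed:
  assumes "neg \<noteq> pos" "neg \<noteq> emp" "pos \<noteq> emp"
  shows "map_pmf (iota neg pos) (leader_mixed neg pos emp C l) = leader_mixed neg pos emp C l"
proof -
  have "map_pmf (iota neg pos) (leader_mixed neg pos emp C l)
      = map_pmf (\<lambda>(b, c). leader_strat neg pos emp C l b c)
          (map_pmf (\<lambda>(b, c). (flip b, flip c)) (pair_pmf coin coin))"
    by (simp add: leader_mixed_eq_map_pmf pmf.map_comp o_def case_prod_unfold iota_leader_strat[OF assms])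
  then show ?thesis
    by (simp add: map_pair map_pmf_flip_coin leader_mixed_eq_map_pmf)
qed

lemma map_iota_follower_mixed:
  assumes "neg \<noteq> pos" "neg \<noteq> emp" "pos \<noteq> emp"
  shows "map_pmf (iota neg pos) (follower_mixed neg pos emp l) = follower_mixed neg pos emp l"
proof -
  have "map_pmf (iota neg pos) (follower_mixed neg pos emp l)
      = map_pmf (follower_strat neg pos emp l) (map_pmf flip coin)"
    by (simp add: follower_mixed_eq_map_pmf pmf.map_comp o_def iota_follower_strat[OF assms])
  then show ?thesis
    by (simp add: map_pmf_flip_coin follower_mixed_eq_map_pmf)
qed

lemma leader_profile_action_symmetric:
  assumes "leader_profile N E r neg pos emp P ld \<sigma>" "neg \<noteq> pos" "neg \<noteq> emp" "pos \<noteq> emp"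
  shows "action_symmetric N neg pos \<sigma>"
  unfolding action_symmetric_def
proof
  fix i
  assume "i \<in> N"
  then obtain C where "C \<in> P" "i \<in> C"
    using assms(1) by (auto simp: leader_profile_def partition_on_def)
  then show "map_pmf (iota neg pos) (\<sigma> i) = \<sigma> i"
    using assms by (simp add: leader_profile_def map_iota_leader_mixed map_iota_follower_mixed)
qed

lemma prob_fair_event:
  assumes "map_pmf Q p = pmf_of_set UNIV"
  shows "measure_pmf.prob p {s. Q s} = 1 / 2"
proof -
  have "measure_pmf.prob p {s. Q s} = measure_pmf.prob (map_pmf Q p) {True}"
    by (simp add: vimage_def)
  then show ?thesis
    by (simp add: assms measure_pmf_of_set UNIV_bool)
qed

lemma set_profile_pmf:
  "finite N \<Longrightarrow> s \<in> set_pmf (profile_pmf N \<sigma>) \<Longrightarrow> k \<in> N \<Longrightarrow> s k \<in> set_pmf (\<sigma> k)"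
  unfolding profile_pmf_def by (auto simp: set_Pi_pmf PiE_dflt_def)

lemma profile_pmf_split:
  assumes "finite N" "l \<in> N"
  shows "profile_pmf N \<sigma>
           = map_pmf (\<lambda>(y, f). f(l := y)) (pair_pmf (\<sigma> l) (Pi_pmf (N - {l}) undefined \<sigma>))"
  using Pi_pmf_insert[of "N - {l}" l undefined \<sigma>] assms
  by (simp add: profile_pmf_def insert_absorb)

lemma actions_fun_upd_cong:
  assumes "i \<noteq> l" "pub y = pub y'" "priv y i = priv y' i"
  shows "actions E r emp (s(l := y)) i = actions E r emp (s(l := y')) i"
proof -
  have "recv_pub E r emp (s(l := y)) i = recv_pub E r emp (s(l := y')) i"
    and "recv_priv E r emp (s(l := y)) i = recv_priv E r emp (s(l := y')) i"
    using assms by (auto simp: recv_pub_def recv_priv_def)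
  then show ?thesis
    using assms(1) by (simp add: actions_def)
qed

lemma actions_leader_strat_outside:
  assumes "i \<notin> C" "i \<noteq> l"
  shows "actions E r emp (s(l := leader_strat neg pos emp C l b c)) i
       = actions E r emp (s(l := leader_strat neg pos emp C l b' c')) i"
  using assms by (intro actions_fun_upd_cong) (auto simp: leader_strat_def)

definition disagree_prob ::
  "'a set \<Rightarrow> ('a \<times> 'a) set \<Rightarrow> nat \<Rightarrow> 'l \<Rightarrow> ('a \<Rightarrow> ('a, 'l) strat pmf) \<Rightarrow> 'a \<Rightarrow> 'a \<Rightarrow> real" where
  "disagree_prob N E r emp \<sigma> i j =
     measure_pmf.prob (profile_pmf N \<sigma>) {s. actions E r emp s i \<noteq> actions E r emp s j}"

lemma abs_aval_diff: "real_of_int \<bar>aval a - aval b\<bar> = 2 * of_bool (a \<noteq> b)"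
  by (cases a; cases b) auto

lemma expectation_of_bool:
  "measure_pmf.expectation p (\<lambda>s. of_bool (Q s)) = measure_pmf.prob p {s. Q s}"
proof -
  have "(\<lambda>s. of_bool (Q s)) = indicator {s. Q s}"
    by (auto simp: indicator_def)
  then show ?thesis
    by (metis Bochner_Integration.integral_indicator Int_UNIV_right space_measure_pmf)
qed

lemma exp_utility_eq_disagree_prob:
  "exp_utility N E r emp \<sigma> i = - 2 * (\<Sum>j\<in>nbrs E i. disagree_prob N E r emp \<sigma> i j)"
  unfolding exp_utility_def utility_def abs_aval_diff disagree_prob_def
  by (simp add: expectation_of_bool integral_sum sum_distrib_left sum_negf
      measure_pmf.integrable_const_bound[where B = 1])

lemma exp_inefficiency_eq_disagree_prob:
  "exp_inefficiency N E r emp \<sigma> = 2 / real (card E) * (\<Sum>(i, j)\<in>E. disagree_prob N E r emp \<sigma> i j)"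
  unfolding exp_inefficiency_def inefficiency_def disagree_prob_def case_prod_unfold
  by (simp add: expectation_of_bool[symmetric] integral_sum of_bool_def
      measure_pmf.integrable_const_bound[where B = 1])

locale leader_game =
  fixes N :: "'a set" and E :: "('a \<times> 'a) set" and r :: nat and neg pos emp :: 'l
    and P :: "'a set set" and ld :: "'a set \<Rightarrow> 'a" and \<sigma> :: "'a \<Rightarrow> ('a, 'l) strat pmf"
  assumes graph: "graph N E"
    and neg_ne_pos: "neg \<noteq> pos"
    and leader_profile: "leader_profile N E r neg pos emp P ld \<sigma>"
begin

definition bit_sent :: "'a \<Rightarrow> ('a, 'l) strat \<Rightarrow> act" where
  "bit_sent j t = (if priv t j = letter_msg emp pos then Plus else Minus)"

lemma finite_N: "finite N"
  using graph by (simp add: graph_def)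

lemma community_exists: "i \<in> N \<Longrightarrow> \<exists>C\<in>P. i \<in> C"
  using leader_profile by (auto simp: leader_profile_def partition_on_def)

lemma community_subset: "C \<in> P \<Longrightarrow> C \<subseteq> N"
  using leader_profile by (auto simp: leader_profile_def partition_on_def)

lemma leader_mem: "C \<in> P \<Longrightarrow> ld C \<in> C"
  and ball_leader: "C \<in> P \<Longrightarrow> C \<subseteq> ball E r (ld C)"
  using leader_profile by (auto simp: leader_profile_def)

lemma strategy_eq: "C \<in> P \<Longrightarrow> i \<in> C \<Longrightarrow>
    \<sigma> i = (if i = ld C then leader_mixed neg pos emp C i else follower_mixed neg pos emp (ld C))"
  using leader_profile by (auto simp: leader_profile_def)

lemma bit_sent_leader_strat: "j \<in> C \<Longrightarrow> bit_sent j (leader_strat neg pos emp C l b c) = b"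
  using neg_ne_pos by (cases b) (auto simp: bit_sent_def leader_strat_def letter_of_def letter_msg_eq_iff)

lemma map_bit_sent_leader_mixed: "j \<in> C \<Longrightarrow> map_pmf (bit_sent j) (leader_mixed neg pos emp C l) = coin"
proof -
  assume "j \<in> C"
  then have "map_pmf (bit_sent j) (leader_mixed neg pos emp C l) = map_pmf fst (pair_pmf coin coin)"
    unfolding leader_mixed_eq_map_pmf pmf.map_comp
    by (intro map_pmf_cong) (auto simp: bit_sent_leader_strat)
  then show ?thesis by (simp add: map_fst_pair_pmf)
qed

lemma leader_strat_in_profile:
  assumes "s \<in> set_pmf (profile_pmf N \<sigma>')" "C \<in> P" "\<sigma>' (ld C) = \<sigma> (ld C)"
  obtains b c where "s (ld C) = leader_strat neg pos emp C (ld C) b c"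
proof -
  have "ld C \<in> C" "ld C \<in> N"
    using leader_mem community_subset assms(2) by auto
  then have "s (ld C) \<in> set_pmf (leader_mixed neg pos emp C (ld C))"
    using set_profile_pmf[OF finite_N assms(1) \<open>ld C \<in> N\<close>] strategy_eq[OF assms(2)] assms(3)
    by simp
  then show ?thesis
    using set_leader_mixed that by metis
qed

lemma actions_member:
  assumes s: "s \<in> set_pmf (profile_pmf N \<sigma>')" and C: "C \<in> P" "j \<in> C"
    and "\<sigma>' j = \<sigma> j" and "\<sigma>' (ld C) = \<sigma> (ld C)"
  shows "actions E r emp s j = bit_sent j (s (ld C))"
proof -
  have "j \<in> N"
    using community_subset C by auto
  obtain b c where b: "s (ld C) = leader_strat neg pos emp C (ld C) b c"
    using leader_strat_in_profile[OF s C(1) assms(5)] .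
  obtain c' where c': "out (s j) = follow_rule neg pos emp (ld C) c'"
  proof (cases "j = ld C")
    case True
    then show ?thesis
      using b that by (simp add: leader_strat_def)
  next
    case False
    then have "s j \<in> set_pmf (follower_mixed neg pos emp (ld C))"
      using set_profile_pmf[OF finite_N s \<open>j \<in> N\<close>] strategy_eq[OF C] assms(4) by simp
    then obtain c where "s j = follower_strat neg pos emp (ld C) c"
      using set_follower_mixed by metis
    then show ?thesis
      using that by (simp add: follower_strat_def)
  qed
  have "sym E"
    using graph by (simp add: graph_def)
  then have "ld C \<in> ball E r j"
    using ball_sym ball_leader[OF C(1)] C(2) by (meson subsetD)
  then have "recv_priv E r emp s j (ld C) = letter_msg emp (letter_of neg pos b)"
    using b C by (simp add: recv_priv_def leader_strat_def)
  then show ?thesis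
    using neg_ne_pos b bit_sent_leader_strat[OF C(2)]
    by (cases b) (simp_all add: actions_def c' follow_rule_def letter_of_def letter_msg_eq_iff)
qed

lemma disagree_prob_same_community:
  assumes "C \<in> P" "i \<in> C" "j \<in> C"
  shows "disagree_prob N E r emp \<sigma> i j = 0"
proof -
  have "actions E r emp s i = actions E r emp s j" if s: "s \<in> set_pmf (profile_pmf N \<sigma>)" for s
  proof -
    obtain b c where "s (ld C) = leader_strat neg pos emp C (ld C) b c"
      using leader_strat_in_profile[OF s assms(1) refl] by blast
    then show ?thesis
      using actions_member[OF s assms(1,2)] actions_member[OF s assms(1,3)]
      by (simp add: bit_sent_leader_strat assms)
  qed
  then show ?thesis
    unfolding disagree_prob_def by (subst measure_pmf_zero_iff) auto
qed

lemma disagree_prob_other_community: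
  assumes i: "i \<in> N" "i \<notin> C" and C: "C \<in> P" "j \<in> C"
  shows "disagree_prob N E r emp (\<sigma>(i := \<tau>)) i j = 1 / 2"
proof -
  define l where "l = ld C"
  define \<sigma>' where "\<sigma>' = \<sigma>(i := \<tau>)"
  define L where "L = leader_mixed neg pos emp C l"
  define Q where "Q = Pi_pmf (N - {l}) undefined \<sigma>'"
  have l: "l \<in> C" "l \<in> N" "l \<noteq> i" "j \<noteq> i"
    using leader_mem community_subset C i unfolding l_def by auto
  have profile: "profile_pmf N \<sigma>' = map_pmf (\<lambda>(y, f). f(l := y)) (pair_pmf L Q)"
    using profile_pmf_split[OF finite_N l(2), of \<sigma>'] strategy_eq[OF C(1) l(1)] l(3)
    unfolding Q_def L_def \<sigma>'_def l_def by simp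
  obtain y0 where y0: "y0 \<in> set_pmf L"
    using set_pmf_not_empty[of L] by auto
  \<comment> \<open>The action of i does not depend on the draw of the leader of C, so it may be
    evaluated at a fixed draw y0.\<close>
  define g where "g f = actions E r emp (f(l := y0)) i" for f
  have "map_pmf (\<lambda>s. actions E r emp s i \<noteq> actions E r emp s j) (profile_pmf N \<sigma>')
      = map_pmf (\<lambda>(y, f). g f \<noteq> bit_sent j y) (pair_pmf L Q)"
    unfolding profile pmf.map_comp
  proof (intro map_pmf_cong refl)
    fix x
    assume "x \<in> set_pmf (pair_pmf L Q)"
    moreover obtain y f where x: "x = (y, f)"
      by (cases x)
    ultimately have yf: "(y, f) \<in> set_pmf (pair_pmf L Q)"
      by simp
    then have "f(l := y) \<in> set_pmf (profile_pmf N \<sigma>')"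
      unfolding profile by force
    then have "actions E r emp (f(l := y)) j = bit_sent j y"
      using actions_member[OF _ C] l by (simp add: \<sigma>'_def l_def)
    moreover have "actions E r emp (f(l := y)) i = g f"
    proof -
      have "y \<in> set_pmf L"
        using yf by simp
      then obtain b c b0 c0
        where "y = leader_strat neg pos emp C l b c" "y0 = leader_strat neg pos emp C l b0 c0"
        using set_leader_mixed y0 unfolding L_def by metis
      then show ?thesis
        unfolding g_def using actions_leader_strat_outside[OF i(2) l(3)[symmetric]] by simp
    qed
    ultimately show "((\<lambda>s. actions E r emp s i \<noteq> actions E r emp s j) \<circ> (\<lambda>(y, f). f(l := y))) x
        = (\<lambda>(y, f). g f \<noteq> bit_sent j y) x"
      by (simp add: x)
  qed
  also have "\<dots> = pmf_of_set UNIV"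
    using disagree_independent_coin map_bit_sent_leader_mixed[OF C(2)] unfolding L_def by blast
  finally show ?thesis
    unfolding disagree_prob_def \<sigma>'_def by (rule prob_fair_event)
qed

lemma equilibrium: "equilibrium N E r emp \<sigma>"
  unfolding equilibrium_def exp_utility_eq_disagree_prob
proof (intro ballI allI)
  fix i \<tau>
  assume i: "i \<in> N"
  have "disagree_prob N E r emp \<sigma> i j \<le> disagree_prob N E r emp (\<sigma>(i := \<tau>)) i j"
    if j: "j \<in> nbrs E i" for j
  proof -
    have "j \<in> N"
      using j graph by (auto simp: graph_def nbrs_def)
    then obtain C where C: "C \<in> P" "j \<in> C"
      using community_exists by blast
    show ?thesis
    proof (cases "i \<in> C")
      case True
      then show ?thesis
        using disagree_prob_same_community[OF C(1) True C(2)] by (simp add: disagree_prob_def)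
    next
      case False
      then show ?thesis
        using disagree_prob_other_community[OF i False C, of \<tau>]
          disagree_prob_other_community[OF i False C, of "\<sigma> i"] by simp
    qed
  qed
  then show "- 2 * (\<Sum>j\<in>nbrs E i. disagree_prob N E r emp (\<sigma>(i := \<tau>)) i j)
      \<le> - 2 * (\<Sum>j\<in>nbrs E i. disagree_prob N E r emp \<sigma> i j)"
    by (simp add: sum_mono)
qed

lemma exp_inefficiency_eq_cut: "exp_inefficiency N E r emp \<sigma> = card (cut_edges E P) / card E"
proof -
  have "disagree_prob N E r emp \<sigma> i j = (if (i, j) \<in> cut_edges E P then 1 / 2 else 0)"
    if e: "(i, j) \<in> E" for i j
  proof -
    have "i \<in> N" "j \<in> N"
      using e graph by (auto simp: graph_def)
    then obtain C where C: "C \<in> P" "j \<in> C"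
      using community_exists by blast
    show ?thesis
    proof (cases "(i, j) \<in> cut_edges E P")
      case True
      then have "i \<notin> C"
        using C unfolding cut_edges_def by auto
      then show ?thesis
        using disagree_prob_other_community[OF \<open>i \<in> N\<close> _ C, of "\<sigma> i"] True by simp
    next
      case False
      then obtain C' where "C' \<in> P" "i \<in> C'" "j \<in> C'"
        using e unfolding cut_edges_def by auto
      then show ?thesis
        using disagree_prob_same_community False by simp
    qed
  qed
  then have "(\<Sum>(i, j)\<in>E. disagree_prob N E r emp \<sigma> i j) = (\<Sum>e\<in>E. if e \<in> cut_edges E P then 1 / 2 else 0)"
    by (intro sum.cong) auto
  also have "\<dots> = (\<Sum>e\<in>E \<inter> cut_edges E P. 1 / 2)"
    using graph finite_N finite_subset[of E "N \<times> N"]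
    by (intro sum.inter_restrict[symmetric]) (simp add: graph_def)
  also have "E \<inter> cut_edges E P = cut_edges E P"
    unfolding cut_edges_def by auto
  finally show ?thesis
    by (simp add: exp_inefficiency_eq_disagree_prob)
qed

end

lemma leader_profile_exists:
  assumes "partition_on N P" "\<forall>C\<in>P. radius_le E r C"
  shows "\<exists>ld \<sigma>. leader_profile N E r neg pos emp P ld \<sigma>"
proof -
  define ld where "ld C = (SOME l. l \<in> C \<and> C \<subseteq> ball E r l)" for C
  have ld: "ld C \<in> C \<and> C \<subseteq> ball E r (ld C)" if "C \<in> P" for C
    unfolding ld_def by (rule someI_ex) (use assms(2) that in \<open>auto simp: radius_le_def\<close>)
  define \<sigma> where "\<sigma> i = (let C = THE C. C \<in> P \<and> i \<in> C in
      if i = ld C then leader_mixed neg pos emp C i else follower_mixed neg pos emp (ld C))" for i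
  have "(THE C. C \<in> P \<and> i \<in> C) = C" if "C \<in> P" "i \<in> C" for C i
    using assms(1) that by (intro the_equality) (auto simp: partition_on_def disjoint_def)
  then have "leader_profile N E r neg pos emp P ld \<sigma>"
    using assms(1) ld by (auto simp: leader_profile_def \<sigma>_def)
  then show ?thesis by blast
qed

theorem theorem1:
  fixes N :: "'a set" and E :: "('a \<times> 'a) set" and r :: nat and \<epsilon> :: real
    and neg pos emp :: "'l::finite"
  assumes "graph N E"
    and "neg \<noteq> pos" and "neg \<noteq> emp" and "pos \<noteq> emp"
    and "r \<ge> 1" and "\<epsilon> \<ge> 0"
    and "amenable N E \<epsilon> r"
  shows "\<exists>P ld \<sigma>. leader_profile N E r neg pos emp P ld \<sigma>
           \<and> equilibrium N E r emp \<sigma>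
           \<and> action_symmetric N neg pos \<sigma>
           \<and> exp_inefficiency N E r emp \<sigma> \<le> \<epsilon>"
proof -
  obtain P where P: "partition_on N P" "\<forall>C\<in>P. radius_le E r C"
    and cut: "real (card (cut_edges E P)) \<le> \<epsilon> * real (card E)"
    using assms(7) unfolding amenable_def by blast
  obtain ld \<sigma> where profile: "leader_profile N E r neg pos emp P ld \<sigma>"
    using leader_profile_exists[OF P, of neg pos emp] by blast
  interpret leader_game N E r neg pos emp P ld \<sigma>
    using assms(1,2) profile by unfold_locales
  have "action_symmetric N neg pos \<sigma>"
    by (rule leader_profile_action_symmetric[OF profile assms(2-4)])
  moreover have "exp_inefficiency N E r emp \<sigma> \<le> \<epsilon>"
    using cut assms(6) by (simp add: exp_inefficiency_eq_cut divide_le_eq)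
  ultimately show ?thesis
    using profile equilibrium by blast
qed

end
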